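(* Consider the setting described in the context. Let $K\in[0,+\infty]$ and let $\zeta$ be a measurable function that is bounded from below on $[0,K]$; set $h=\zeta 1_{[0,K]}$ (restricted to $(0,\infty)$). Let $v>0$, and let $u=-vK/\hat s_0$ if $K<+\infty$, or $u$ be any real number if $K=+\infty$. Put $\hat\theta=\lambda\gamma(1-\rho^2)$, $\omega=W(\hat\theta v\eta^2T)$, $\hat K=K/\hat s_0$ and $\hat\zeta(x)=\zeta(\hat s_0x)$ for $x\ge 0$. Suppose $$\frac{\omega}{\eta^{2}T}+\frac{\omega^2}{2\eta^{2}T}\leq \frac{K}{s_0}\,\hat\theta\, v\, e^{-(\delta-\frac{\eta^2}{2})T}.$$ Then $p_h=D_{\zeta,K}+A_{\zeta,K}$, where $$D_{\zeta,K}=\lambda e^{-rT}u+\frac{e^{-rT}}{\gamma(1-\rho^2)}\left(\frac{\omega}{\eta^2T}+\frac{\omega^2}{2\eta^2T}\right),\qquad A_{\zeta,K}=-\frac{e^{-rT}}{\gamma(1-\rho^2)}\ln I,$$ with $$I=\mathbb{E}\left(\exp\left[-\hat\theta\left(\hat\zeta\left(\frac{\omega}{\hat\theta v\eta^2T}e^{\eta\sqrt{T}N}\right)-u-\frac{\omega}{\hat\theta\eta^2T}e^{\eta\sqrt{T}N}\right)1_{N\leq\frac{\ln\hat K}{\eta\sqrt T}+\frac{\omega}{\eta\sqrt T}}\right]\phi(N)\right),$$ $$\phi(y)=\exp\left(-\frac{\omega}{\eta^2T}\left(e^{\eta\sqrt Ty}-1-\eta\sqrt Ty\right)\right)\exp\left(\left(\frac{\omega}{\eta^2T}e^{\eta\sqrt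 Ty}-\hat\theta v\hat K\right)_+\right)$$ (conventions $\ln(+\infty)=+\infty$, $\ln 0=-\infty$, $(-\infty)_+=0$). Moreover, $V(x_0,s_0,\lambda,h)=V_D\,V_A$, where $$V_D=-\frac1\gamma\exp\left(-\gamma e^{rT}(x_0+D_{\zeta,K})-\frac{(\mu-r)^2}{2\sigma^2}T\right),\qquad V_A=\exp\left(-\gamma e^{rT}A_{\zeta,K}\right).$$
   Context: Fix $T>0$, $r\in\mathbb R$, $\nu,\mu\in\mathbb R$, $\eta>0$, $\sigma>0$, $\rho\in(-1,1)$, $s_0>0$, $\lambda>0$, risk aversion $\gamma>0$ and initial wealth $x_0\in\mathbb R$. Let $N$ be a standard Gaussian random variable. Set $\delta=\nu-\eta\rho\frac{\mu-r}{\sigma}$ and $\hat s_0=s_0e^{(\delta-\frac{\eta^2}{2})T}$. (Model: a non-traded asset $dS_t=S_t(\nu dt+\eta dZ_t)$, a traded asset $dP_t=P_t(\mu dt+\sigma dB_t)$ with $d\langle Z,B\rangle_t=\rho\,dt$, a bond with rate $r$, and an agent with utility $U(x)=-\frac1\gamma e^{-\gamma x}$ receiving $\lambda$ units of $h(S_T)$ at $T$.) For a measurable $h$ bounded from below on $(0,\infty)$, the value function (maximal expected utility) and the asking reservation price are given by $$V(x_0,s_0,\lambda,h)=-\frac1\gamma e^{-\gamma x_0e^{rT}-\frac{(\mu-r)^2}{2\sigma^2}T}\left(\mathbb E\exp\left(-\lambda\gamma(1-\rho^2)h(\hat s_0e^{\eta\sqrt TN})\right)\right)^{\frac1{1-\rho^2}},$$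 $$p_h=-\frac{e^{-rT}}{\gamma(1-\rho^2)}\ln\mathbb E\exp\left(-\lambda\gamma(1-\rho^2)h(\hat s_0e^{\eta\sqrt TN})\right).$$ $W$ denotes the Lambert function, the inverse of $x\in(-1,\infty)\mapsto xe^x\in(-1/e,\infty)$; $x_+=\max(x,0)$. *)

theory Defs
  imports "HOL-Probability.Probability"
begin

definition gaussE :: "(real \<Rightarrow> real) \<Rightarrow> real" where
  "gaussE f = (LINT y|lborel. std_normal_density y * f y)"

definition lambertW :: "real \<Rightarrow> real" where
  "lambertW y = (THE x. x > -1 \<and> x * exp x = y)"

definition eln :: "ereal \<Rightarrow> ereal" where
  "eln x = (if x = \<infinity> then \<infinity> else if x \<le> 0 then -\<infinity> else ereal (ln (real_of_ereal x)))"

definition delta_par :: "real \<Rightarrow> real \<Rightarrow> real \<Rightarrow> real \<Rightarrow> real \<Rightarrow> real \<Rightarrow> real" where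
  "delta_par \<nu> \<eta> \<rho> \<mu> r \<sigma> = \<nu> - \<eta> * \<rho> * (\<mu> - r) / \<sigma>"

definition s_hat :: "real \<Rightarrow> real \<Rightarrow> real \<Rightarrow> real \<Rightarrow> real \<Rightarrow> real \<Rightarrow> real \<Rightarrow> real \<Rightarrow> real" where
  "s_hat s0 T \<nu> \<eta> \<rho> \<mu> r \<sigma> = s0 * exp ((delta_par \<nu> \<eta> \<rho> \<mu> r \<sigma> - \<eta>\<^sup>2 / 2) * T)"

definition value_fn ::
  "real \<Rightarrow> real \<Rightarrow> real \<Rightarrow> real \<Rightarrow> real \<Rightarrow> real \<Rightarrow> real \<Rightarrow> real \<Rightarrow> real
   \<Rightarrow> real \<Rightarrow> real \<Rightarrow> (real \<Rightarrow> real) \<Rightarrow> real" where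
  "value_fn T r \<nu> \<mu> \<eta> \<sigma> \<rho> \<gamma> x0 s0 lam h =
     - (1 / \<gamma>) * exp (- \<gamma> * x0 * exp (r * T) - (\<mu> - r)\<^sup>2 / (2 * \<sigma>\<^sup>2) * T)
     * (gaussE (\<lambda>y. exp (- lam * \<gamma> * (1 - \<rho>\<^sup>2)
            * h (s_hat s0 T \<nu> \<eta> \<rho> \<mu> r \<sigma> * exp (\<eta> * sqrt T * y))))) powr (1 / (1 - \<rho>\<^sup>2))"

definition res_price ::
  "real \<Rightarrow> real \<Rightarrow> real \<Rightarrow> real \<Rightarrow> real \<Rightarrow> real \<Rightarrow> real \<Rightarrow> real \<Rightarrow> real
   \<Rightarrow> real \<Rightarrow> (real \<Rightarrow> real) \<Rightarrow> real" where
  "res_price T r \<nu> \<mu> \<eta> \<sigma> \<rho> \<gamma> s0 lam h =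
     - (exp (- r * T) / (\<gamma> * (1 - \<rho>\<^sup>2)))
     * ln (gaussE (\<lambda>y. exp (- lam * \<gamma> * (1 - \<rho>\<^sup>2)
            * h (s_hat s0 T \<nu> \<eta> \<rho> \<mu> r \<sigma> * exp (\<eta> * sqrt T * y)))))"

end

theory Submission
  imports Defs
begin

text \<open>Shifting the Gaussian variable by \<open>\<omega> / (\<eta> sqrt T)\<close> (a Cameron--Martin change of
measure) turns the integrand of the expectation defining \<open>p\<^sub>h\<close> pointwise into a constant times
the integrand of \<open>I\<close>. The Lambert relation \<open>\<omega> exp \<omega> = \<theta> v \<eta>\<^sup>2 T\<close> is exactly what identifies the shifted claim
argument \<open>sh exp (\<eta> sqrt T y - \<omega>)\<close> with \<open>sh \<omega> / (\<theta> v \<eta>\<^sup>2 T) exp (\<eta> sqrt T y)\<close>, and the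
choice of \<open>u\<close> makes the integrands agree also where the claim vanishes. Taking logarithms gives
\<open>p\<^sub>h = D + A\<close>, and \<open>V\<close> is an explicit function of \<open>p\<^sub>h\<close>.\<close>

lemma gaussE_pos:
  fixes f :: "real \<Rightarrow> real"
  assumes [measurable]: "f \<in> borel_measurable borel"
    and pos: "\<And>y. 0 < f y" and bound: "\<And>y. f y \<le> M"
  shows "0 < gaussE f"
proof -
  let ?q = "\<lambda>y. std_normal_density y * f y"
  have q_pos: "0 < ?q y" for y
    using pos by (simp add: normal_density_pos)
  have int: "integrable lborel ?q"
  proof (rule Bochner_Integration.integrable_bound)
    show "integrable lborel (\<lambda>y. std_normal_density y * M)" by simp
    have "\<bar>f y\<bar> \<le> \<bar>M\<bar>" for y
      using pos[of y] bound[of y] by simp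
    then show "AE y in lborel. norm (?q y) \<le> norm (std_normal_density y * M)"
      by (intro AE_I2) (simp add: abs_mult normal_density_nonneg mult_left_mono)
  qed simp
  have "\<not> (AE y in lborel. ?q y = 0)"
  proof
    assume "AE y in lborel. ?q y = 0"
    then have "AE (y :: real) in lborel. False"
      by (rule eventually_mono) (metis q_pos less_irrefl)
    then show False
      using ae_filter_eq_bot_iff[of "lborel :: real measure"] by (simp add: trivial_limit_def)
  qed
  then have "integral\<^sup>L lborel ?q \<noteq> 0"
    using integral_nonneg_eq_0_iff_AE[OF int] q_pos by (simp add: less_imp_le)
  moreover have "0 \<le> integral\<^sup>L lborel ?q"
    using q_pos by (simp add: less_imp_le)
  ultimately show ?thesis
    unfolding gaussE_def by linarith
qed

lemma gaussE_exp_pos: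
  fixes h g :: "real \<Rightarrow> real"
  assumes [measurable]: "h \<in> borel_measurable borel" "g \<in> borel_measurable borel"
    and lower: "\<And>x. B \<le> h x" and c: "c \<le> 0"
  shows "0 < gaussE (\<lambda>y. exp (c * h (g y)))"
  by (rule gaussE_pos[where M = "exp (c * B)"]) (use lower c in \<open>simp_all add: mult_left_mono_neg\<close>)

lemma gaussE_mult_right: "gaussE (\<lambda>y. c * f y) = c * gaussE f"
  unfolding gaussE_def by (simp add: mult.left_commute)

lemma std_normal_density_shift:
  "std_normal_density (y - c) = exp (- c\<^sup>2 / 2) * exp (c * y) * std_normal_density y"
  unfolding std_normal_density_def by (simp add: exp_add[symmetric] power2_eq_square field_simps)

lemma gaussE_shift:
  "gaussE f = exp (- c\<^sup>2 / 2) * gaussE (\<lambda>y. exp (c * y) * f (y - c))"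
proof -
  have "gaussE f = (LINT y|lborel. std_normal_density (- c + 1 * y) * f (- c + 1 * y))"
    unfolding gaussE_def using lborel_integral_real_affine[of 1 _ "- c"] by simp
  also have "\<dots> = (LINT y|lborel. exp (- c\<^sup>2 / 2) * (std_normal_density y * (exp (c * y) * f (y - c))))"
    using std_normal_density_shift by (simp add: mult_ac)
  finally show ?thesis
    unfolding gaussE_def by simp
qed

lemma lambertW_pos:
  fixes y :: real
  assumes y: "0 < y"
  shows "0 < lambertW y \<and> lambertW y * exp (lambertW y) = y"
proof -
  have "\<exists>x\<ge>0. x \<le> y \<and> x * exp x = y"
  proof (rule IVT)
    show "y \<le> y * exp y"
      using y by simp
  qed (use y in \<open>auto intro!: continuous_intros\<close>)
  then obtain x where x: "0 < x" "x * exp x = y"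
    using y by (metis mult_zero_left less_eq_real_def)
  have "lambertW y = x"
    unfolding lambertW_def
  proof (rule the_equality)
    fix z
    assume z: "z > -1 \<and> z * exp z = y"
    then have "0 < z * exp z"
      using y by simp
    then have "0 < z"
      by (simp add: zero_less_mult_iff)
    show "z = x"
    proof (rule linorder_cases[of z x])
      assume "z < x"
      then have "z * exp z < x * exp x"
        using \<open>0 < z\<close> by (intro mult_strict_mono) auto
      then show ?thesis using x z by simp
    next
      assume "x < z"
      then have "x * exp x < z * exp z"
        using x by (intro mult_strict_mono) auto
      then show ?thesis using x z by simp
    qed
  qed (use x in auto)
  then show ?thesis
    using x by simp
qed

lemma le_eln_threshold_iff:
  fixes K :: ereal and a c s y :: real
  assumes a: "0 < a" and s: "0 < s" and K: "0 \<le> K"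
  shows "ereal y \<le> eln (K / ereal s) / ereal a + ereal (c / a) \<longleftrightarrow> ereal (s * exp (a * y - c)) \<le> K"
proof (cases K)
  case (real k)
  show ?thesis
  proof (cases "k = 0")
    case True
    then show ?thesis
      using real a s by (simp add: eln_def not_le)
  next
    case False
    then have k: "0 < k"
      using K real by simp
    have "ereal y \<le> eln (K / ereal s) / ereal a + ereal (c / a) \<longleftrightarrow> y \<le> ln (k / s) / a + c / a"
      using real a s k by (simp add: eln_def not_le divide_le_0_iff)
    also have "\<dots> \<longleftrightarrow> a * y - c \<le> ln (k / s)"
      using a by (simp add: field_simps)
    also have "\<dots> \<longleftrightarrow> exp (a * y - c) \<le> k / s"
      using k s by (subst ln_ge_iff) auto
    also have "\<dots> \<longleftrightarrow> s * exp (a * y - c) \<le> k"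
      using s by (simp add: field_simps)
    finally show ?thesis
      using real by simp
  qed
qed (use K a s in \<open>simp_all add: eln_def\<close>)

lemma real_of_ereal_excess_pos_part:
  fixes K :: ereal and q s x :: real
  assumes q: "0 < q" and s: "0 < s" and K: "0 \<le> K"
  shows "real_of_ereal (max 0 (ereal (q * x) - ereal q * (K / ereal s)))
    = (if ereal (s * x) \<le> K then 0 else q * x - q * real_of_ereal K / s)"
proof (cases K)
  case (real k)
  have "q * x - q * k / s = q * (s * x - k) / s"
    using s by (simp add: field_simps)
  moreover have "q * (s * x - k) / s \<le> 0 \<longleftrightarrow> s * x \<le> k"
    using q s by (simp add: divide_le_0_iff mult_le_0_iff)
  ultimately show ?thesis
    using real by (auto simp: max_def)
qed (use K q s in auto)

definition shifted_claim_integrand ::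
  "real \<Rightarrow> real \<Rightarrow> real \<Rightarrow> real \<Rightarrow> real \<Rightarrow> real \<Rightarrow> real \<Rightarrow> ereal \<Rightarrow> (real \<Rightarrow> real) \<Rightarrow> real \<Rightarrow> real" where
  "shifted_claim_integrand \<theta> v \<eta> T \<omega> sh u K \<zeta> y =
     exp (- \<theta> * (\<zeta> (sh * (\<omega> / (\<theta> * v * \<eta>\<^sup>2 * T) * exp (\<eta> * sqrt T * y))) - u
                  - \<omega> / (\<theta> * \<eta>\<^sup>2 * T) * exp (\<eta> * sqrt T * y))
            * (if ereal y \<le> eln (K / ereal sh) / ereal (\<eta> * sqrt T) + ereal (\<omega> / (\<eta> * sqrt T)) then 1 else 0))
     * (exp (- (\<omega> / (\<eta>\<^sup>2 * T)) * (exp (\<eta> * sqrt T * y) - 1 - \<eta> * sqrt T * y))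
        * exp (real_of_ereal (max 0 (ereal (\<omega> / (\<eta>\<^sup>2 * T) * exp (\<eta> * sqrt T * y))
                                     - ereal (\<theta> * v) * (K / ereal sh)))))"

lemma claim_integrand_shift_eq:
  fixes \<theta> v \<eta> T \<omega> sh u y :: real and K :: ereal and \<zeta> h :: "real \<Rightarrow> real"
  assumes \<theta>: "0 < \<theta>" and v: "0 < v" and \<eta>: "0 < \<eta>" and T: "0 < T" and sh: "0 < sh" and K: "0 \<le> K"
    and \<omega>: "\<omega> * exp \<omega> = \<theta> * v * \<eta>\<^sup>2 * T"
    and h: "h = (\<lambda>x. if 0 \<le> x \<and> ereal x \<le> K then \<zeta> x else 0)"
    and u: "K \<noteq> \<infinity> \<longrightarrow> u = - v * real_of_ereal K / sh"
  shows "exp (\<omega> / (\<eta> * sqrt T) * y) * exp (- \<theta> * h (sh * exp (\<eta> * sqrt T * (y - \<omega> / (\<eta> * sqrt T)))))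
    = exp (- \<theta> * u - \<omega> / (\<eta>\<^sup>2 * T)) * shifted_claim_integrand \<theta> v \<eta> T \<omega> sh u K \<zeta> y"
proof -
  define a where "a = \<eta> * sqrt T"
  define X where "X = exp (a * y - \<omega>)"
  have a: "0 < a" and a2: "\<eta>\<^sup>2 * T = a\<^sup>2"
    unfolding a_def using \<eta> T by (simp_all add: power_mult_distrib)
  have \<theta>v: "0 < \<theta> * v"
    using \<theta> v by simp
  have "\<omega> * exp \<omega> = \<theta> * v * a\<^sup>2"
    using \<omega> by (simp add: a2[symmetric] mult.assoc)
  moreover have "0 < \<theta> * v * a\<^sup>2"
    using \<theta>v a by simp
  ultimately have \<omega>_pos: "0 < \<omega>"
    by (metis exp_gt_zero zero_less_mult_pos2)
  have \<omega>_exp: "\<omega> / a\<^sup>2 = \<theta> * v * exp (- \<omega>)"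
    using \<open>\<omega> * exp \<omega> = \<theta> * v * a\<^sup>2\<close> a by (simp add: exp_minus field_simps)
  have arg_h: "sh * exp (a * (y - \<omega> / a)) = sh * X"
    unfolding X_def using a by (simp add: algebra_simps)
  have arg_\<zeta>: "\<omega> / (\<theta> * v * \<eta>\<^sup>2 * T) * exp (a * y) = X"
    unfolding \<omega>[symmetric] X_def using \<omega>_pos by (simp add: exp_diff)
  have scaled_X: "\<omega> / (\<eta>\<^sup>2 * T) * exp (a * y) = \<theta> * v * X"
    unfolding X_def a2 \<omega>_exp by (simp add: exp_diff exp_minus field_simps)
  have ind: "ereal y \<le> eln (K / ereal sh) / ereal a + ereal (\<omega> / a) \<longleftrightarrow> ereal (sh * X) \<le> K"
    unfolding X_def using le_eln_threshold_iff[OF a sh K] .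
  have h_X: "h (sh * X) = (if ereal (sh * X) \<le> K then \<zeta> (sh * X) else 0)"
    unfolding h X_def using sh by simp
  have \<theta>a2: "\<theta> * \<eta>\<^sup>2 * T = \<theta> * a\<^sup>2"
    using a2 by (simp add: mult.assoc)
  show ?thesis
  proof (cases "ereal (sh * X) \<le> K")
    case True
    then show ?thesis
      unfolding shifted_claim_integrand_def a_def[symmetric]
      unfolding arg_h h_X arg_\<zeta> ind scaled_X real_of_ereal_excess_pos_part[OF \<theta>v sh K]
      unfolding a2 \<theta>a2
      using a \<theta> by (simp add: exp_add[symmetric] field_simps power2_eq_square)
  next
    case False
    then have "K \<noteq> \<infinity>"
      by auto
    then have "u = - v * real_of_ereal K / sh"
      using u by blast
    then show ?thesis
      unfolding shifted_claim_integrand_def a_def[symmetric]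
      unfolding arg_h h_X arg_\<zeta> ind scaled_X real_of_ereal_excess_pos_part[OF \<theta>v sh K]
      unfolding a2 \<theta>a2
      using False scaled_X[unfolded a2] a \<theta> sh by (simp add: exp_add[symmetric] field_simps power2_eq_square)
  qed
qed

lemma gaussE_claim_eq:
  fixes \<theta> v \<eta> T \<omega> sh u :: real and K :: ereal and \<zeta> h :: "real \<Rightarrow> real"
  assumes "0 < \<theta>" "0 < v" "0 < \<eta>" and T: "0 < T" and "0 < sh" "0 \<le> K"
    and "\<omega> * exp \<omega> = \<theta> * v * \<eta>\<^sup>2 * T"
    and "h = (\<lambda>x. if 0 \<le> x \<and> ereal x \<le> K then \<zeta> x else 0)"
    and "K \<noteq> \<infinity> \<longrightarrow> u = - v * real_of_ereal K / sh"
  shows "gaussE (\<lambda>y. exp (- \<theta> * h (sh * exp (\<eta> * sqrt T * y))))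
    = exp (- \<theta> * u - (\<omega> / (\<eta>\<^sup>2 * T) + \<omega>\<^sup>2 / (2 * \<eta>\<^sup>2 * T)))
      * gaussE (shifted_claim_integrand \<theta> v \<eta> T \<omega> sh u K \<zeta>)"
proof -
  have "gaussE (\<lambda>y. exp (- \<theta> * h (sh * exp (\<eta> * sqrt T * y))))
      = exp (- (\<omega> / (\<eta> * sqrt T))\<^sup>2 / 2) * gaussE (\<lambda>y. exp (\<omega> / (\<eta> * sqrt T) * y)
          * exp (- \<theta> * h (sh * exp (\<eta> * sqrt T * (y - \<omega> / (\<eta> * sqrt T))))))"
    by (rule gaussE_shift)
  also have "\<dots> = exp (- (\<omega> / (\<eta> * sqrt T))\<^sup>2 / 2)
      * (exp (- \<theta> * u - \<omega> / (\<eta>\<^sup>2 * T)) * gaussE (shifted_claim_integrand \<theta> v \<eta> T \<omega> sh u K \<zeta>))"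
    unfolding claim_integrand_shift_eq[OF assms] gaussE_mult_right ..
  finally show ?thesis
    using T by (simp add: power_divide power_mult_distrib mult_exp_exp mult.assoc diff_divide_distrib)
qed

lemma res_price_eq_of_factorization:
  assumes \<gamma>: "0 < \<gamma>" and \<rho>: "\<rho>\<^sup>2 < 1"
    and fac: "gaussE (\<lambda>y. exp (- lam * \<gamma> * (1 - \<rho>\<^sup>2)
                              * h (s_hat s0 T \<nu> \<eta> \<rho> \<mu> r \<sigma> * exp (\<eta> * sqrt T * y))))
      = exp (- lam * \<gamma> * (1 - \<rho>\<^sup>2) * u - k) * J"
    and J: "0 < J"
  shows "res_price T r \<nu> \<mu> \<eta> \<sigma> \<rho> \<gamma> s0 lam h
    = (lam * exp (- r * T) * u + exp (- r * T) / (\<gamma> * (1 - \<rho>\<^sup>2)) * k)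
      + - (exp (- r * T) / (\<gamma> * (1 - \<rho>\<^sup>2))) * ln J"
proof -
  define c where "c = exp (- r * T) / (\<gamma> * (1 - \<rho>\<^sup>2))"
  have c_lam: "c * (lam * \<gamma> * (1 - \<rho>\<^sup>2)) = lam * exp (- r * T)"
    unfolding c_def using \<gamma> \<rho> by (simp add: field_simps)
  have "res_price T r \<nu> \<mu> \<eta> \<sigma> \<rho> \<gamma> s0 lam h = - c * ln (exp (- lam * \<gamma> * (1 - \<rho>\<^sup>2) * u - k) * J)"
    unfolding res_price_def fac c_def ..
  also have "\<dots> = c * (lam * \<gamma> * (1 - \<rho>\<^sup>2)) * u + c * k + - c * ln J"
    using J by (simp add: ln_mult algebra_simps)
  finally show ?thesis
    unfolding c_lam unfolding c_def .
qed

lemma value_fn_eq_of_res_price: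
  assumes \<gamma>: "0 < \<gamma>" and \<rho>: "\<rho>\<^sup>2 < 1"
    and pos: "0 < gaussE (\<lambda>y. exp (- lam * \<gamma> * (1 - \<rho>\<^sup>2)
                              * h (s_hat s0 T \<nu> \<eta> \<rho> \<mu> r \<sigma> * exp (\<eta> * sqrt T * y))))"
    and price: "res_price T r \<nu> \<mu> \<eta> \<sigma> \<rho> \<gamma> s0 lam h = D + A"
  shows "value_fn T r \<nu> \<mu> \<eta> \<sigma> \<rho> \<gamma> x0 s0 lam h
    = (- (1 / \<gamma>) * exp (- \<gamma> * exp (r * T) * (x0 + D) - (\<mu> - r)\<^sup>2 / (2 * \<sigma>\<^sup>2) * T))
      * exp (- \<gamma> * exp (r * T) * A)"
proof -
  have "ln (gaussE (\<lambda>y. exp (- lam * \<gamma> * (1 - \<rho>\<^sup>2)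
                              * h (s_hat s0 T \<nu> \<eta> \<rho> \<mu> r \<sigma> * exp (\<eta> * sqrt T * y))))) / (1 - \<rho>\<^sup>2)
      = - \<gamma> * exp (r * T) * (D + A)"
    using price \<gamma> \<rho> unfolding res_price_def by (simp add: exp_minus field_simps)
  then show ?thesis
    unfolding value_fn_def using pos by (simp add: powr_def mult_exp_exp algebra_simps)
qed

theorem theorem2:
  fixes T r \<nu> \<mu> \<eta> \<sigma> \<rho> s0 lam \<gamma> x0 v u :: real
    and K :: ereal
    and \<zeta> h :: "real \<Rightarrow> real"
  assumes T: "T > 0" and eta: "\<eta> > 0" and sigma: "\<sigma> > 0"
    and rho: "-1 < \<rho>" "\<rho> < 1"
    and s0: "s0 > 0" and lam: "lam > 0" and gam: "\<gamma> > 0"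
    and K: "K \<ge> 0"
    and zeta_meas: "\<zeta> \<in> borel_measurable borel"
    and zeta_bdd: "\<exists>B. \<forall>x. 0 \<le> x \<and> ereal x \<le> K \<longrightarrow> B \<le> \<zeta> x"
    and h_def: "h = (\<lambda>x. if 0 \<le> x \<and> ereal x \<le> K then \<zeta> x else 0)"
    and v: "v > 0"
    and u: "K \<noteq> \<infinity> \<Longrightarrow> u = - v * real_of_ereal K / s_hat s0 T \<nu> \<eta> \<rho> \<mu> r \<sigma>"
  defines "sh \<equiv> s_hat s0 T \<nu> \<eta> \<rho> \<mu> r \<sigma>"
    and "\<theta> \<equiv> lam * \<gamma> * (1 - \<rho>\<^sup>2)"
  defines "\<omega> \<equiv> lambertW (\<theta> * v * \<eta>\<^sup>2 * T)"
    and "Kh \<equiv> K / ereal sh"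
    and "\<zeta>h \<equiv> (\<lambda>x. \<zeta> (sh * x))"
  defines "\<phi> \<equiv> (\<lambda>y. exp (- (\<omega> / (\<eta>\<^sup>2 * T)) * (exp (\<eta> * sqrt T * y) - 1 - \<eta> * sqrt T * y))
                  * exp (real_of_ereal (max 0 (ereal (\<omega> / (\<eta>\<^sup>2 * T) * exp (\<eta> * sqrt T * y))
                                               - ereal (\<theta> * v) * Kh))))"
  defines "I \<equiv> gaussE (\<lambda>y. exp (- \<theta> *
               (\<zeta>h (\<omega> / (\<theta> * v * \<eta>\<^sup>2 * T) * exp (\<eta> * sqrt T * y)) - u
                 - \<omega> / (\<theta> * \<eta>\<^sup>2 * T) * exp (\<eta> * sqrt T * y))
               * (if ereal y \<le> eln Kh / ereal (\<eta> * sqrt T) + ereal (\<omega> / (\<eta> * sqrt T)) then 1 else 0))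
             * \<phi> y)"
  defines "D \<equiv> lam * exp (- r * T) * u
              + exp (- r * T) / (\<gamma> * (1 - \<rho>\<^sup>2)) * (\<omega> / (\<eta>\<^sup>2 * T) + \<omega>\<^sup>2 / (2 * \<eta>\<^sup>2 * T))"
    and "A \<equiv> - (exp (- r * T) / (\<gamma> * (1 - \<rho>\<^sup>2))) * ln I"
  assumes ineq: "ereal (\<omega> / (\<eta>\<^sup>2 * T) + \<omega>\<^sup>2 / (2 * \<eta>\<^sup>2 * T))
      \<le> K / ereal s0 * ereal (\<theta> * v * exp (- (delta_par \<nu> \<eta> \<rho> \<mu> r \<sigma> - \<eta>\<^sup>2 / 2) * T))"
  shows "res_price T r \<nu> \<mu> \<eta> \<sigma> \<rho> \<gamma> s0 lam h = D + A
    \<and> value_fn T r \<nu> \<mu> \<eta> \<sigma> \<rho> \<gamma> x0 s0 lam h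
        = (- (1 / \<gamma>) * exp (- \<gamma> * exp (r * T) * (x0 + D) - (\<mu> - r)\<^sup>2 / (2 * \<sigma>\<^sup>2) * T))
          * exp (- \<gamma> * exp (r * T) * A)"
proof -
  have \<rho>2: "\<rho>\<^sup>2 < 1"
    using rho by (simp add: abs_square_less_1)
  have \<theta>: "0 < \<theta>"
    unfolding \<theta>_def using lam gam \<rho>2 by simp
  have sh: "0 < sh"
    unfolding sh_def s_hat_def using s0 by simp
  have \<omega>: "\<omega> * exp \<omega> = \<theta> * v * \<eta>\<^sup>2 * T"
    unfolding \<omega>_def using \<theta> v eta T by (intro lambertW_pos[THEN conjunct2]) simp
  have u_sh: "K \<noteq> \<infinity> \<longrightarrow> u = - v * real_of_ereal K / sh"
    using u unfolding sh_def by blast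
  have I_eq: "I = gaussE (shifted_claim_integrand \<theta> v \<eta> T \<omega> sh u K \<zeta>)"
    unfolding I_def \<phi>_def \<zeta>h_def Kh_def shifted_claim_integrand_def ..
  have E_eq: "gaussE (\<lambda>y. exp (- lam * \<gamma> * (1 - \<rho>\<^sup>2) * h (s_hat s0 T \<nu> \<eta> \<rho> \<mu> r \<sigma> * exp (\<eta> * sqrt T * y))))
      = exp (- lam * \<gamma> * (1 - \<rho>\<^sup>2) * u - (\<omega> / (\<eta>\<^sup>2 * T) + \<omega>\<^sup>2 / (2 * \<eta>\<^sup>2 * T))) * I"
    using gaussE_claim_eq[OF \<theta> v eta T sh K \<omega> h_def u_sh] unfolding I_eq sh_def \<theta>_def by simp
  obtain B where "\<And>x. 0 \<le> x \<Longrightarrow> ereal x \<le> K \<Longrightarrow> B \<le> \<zeta> x"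
    using zeta_bdd by blast
  then have "min B 0 \<le> h x" for x
    unfolding h_def by (auto simp: min.coboundedI1)
  moreover have "h \<in> borel_measurable borel"
    using zeta_meas unfolding h_def by measurable
  ultimately have E_pos: "0 < gaussE (\<lambda>y. exp (- lam * \<gamma> * (1 - \<rho>\<^sup>2)
                                  * h (s_hat s0 T \<nu> \<eta> \<rho> \<mu> r \<sigma> * exp (\<eta> * sqrt T * y))))"
    using \<theta> unfolding \<theta>_def by (intro gaussE_exp_pos) simp_all
  then have "0 < I"
    unfolding E_eq by (simp add: zero_less_mult_iff)
  then have price: "res_price T r \<nu> \<mu> \<eta> \<sigma> \<rho> \<gamma> s0 lam h = D + A"
    unfolding D_def A_def by (rule res_price_eq_of_factorization[OF gam \<rho>2 E_eq])
  then show ?thesis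
    using value_fn_eq_of_res_price[OF gam \<rho>2 E_pos] by blast
qed

end
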